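(* Let $\Gamma$ be a finite multiset of formulas and $G$ a formula. If the sequent $\Gamma\longrightarrow G$ has an $\mathbf{I}$-proof in which (1) either no $\lor$-L rule is used, or no $\lor$-R and no $\exists$-R rules are used, and (2) either no $\exists$-L rule or no $\exists$-R rule is used, then $\Gamma\longrightarrow G$ has a uniform proof. Moreover, this characterization is tight: for each of the three combinations $\{\lor\text{-L},\exists\text{-R}\}$, $\{\lor\text{-L},\lor\text{-R}\}$, $\{\exists\text{-L},\exists\text{-R}\}$ there is a sequent with an $\mathbf{I}$-proof in which rules of both kinds in that combination are used, but which has no uniform proof.
   Context: Formulas are first-order formulas built from atomic formulas and the logical constants $\top$, $\bot$ (not counted as atomic) using $\land,\lor,\supset,\forall,\exists$; $\neg A$ abbreviates $A\supset\bot$; $B[t/x]$ is capture-avoiding substitution of term $t$ for free $x$ in $B$. A sequent $\Gamma\longrightarrow\Delta$ is a pair of finite multisets of formulas; $B,\Gamma$ denotes $\Gamma$ with an extra occurrence of $B$. A sequent is an axiom if $\top\in\Delta$ or some formula that is $\bot$ or atomic occurs in both $\Gamma$ and $\Delta$. Writing premises $\Rightarrow$ conclusion, the rules are all instances of: contr-L: $B,B,\Gamma\longrightarrow\Delta\Rightarrow B,\Gamma\longrightarrow\Delta$; contr-R: $\Gamma\longrightarrow\Delta,B,B\Rightarrow\Gamma\longrightarrow\Delta,B$; $\bot$-R: $\Gamma\longrightarrow\Delta,\bot\Rightarrow\Gamma\longrightarrow\Delta,D$; $\land$-L: $B,\Gamma\longrightarrow\Delta\Rightarrow B\land D,\Gamma\longrightarrow\Delta$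 and $D,\Gamma\longrightarrow\Delta\Rightarrow B\land D,\Gamma\longrightarrow\Delta$; $\lor$-L: $B,\Gamma\longrightarrow\Delta$ and $D,\Gamma\longrightarrow\Delta\Rightarrow B\lor D,\Gamma\longrightarrow\Delta$; $\land$-R: $\Gamma\longrightarrow\Delta,B$ and $\Gamma\longrightarrow\Delta,D\Rightarrow\Gamma\longrightarrow\Delta,B\land D$; $\lor$-R: $\Gamma\longrightarrow\Delta,B\Rightarrow\Gamma\longrightarrow\Delta,B\lor D$ and $\Gamma\longrightarrow\Delta,D\Rightarrow\Gamma\longrightarrow\Delta,B\lor D$; $\supset$-L: $\Gamma\longrightarrow\Delta,B$ and $D,\Gamma\longrightarrow\Theta\Rightarrow B\supset D,\Gamma\longrightarrow\Delta,\Theta$; $\supset$-R: $B,\Gamma\longrightarrow\Delta,D\Rightarrow\Gamma\longrightarrow\Delta,B\supset D$; $\forall$-L: $B[t/x],\Gamma\longrightarrow\Delta\Rightarrow\forall x B,\Gamma\longrightarrow\Delta$; $\exists$-R: $\Gamma\longrightarrow\Delta,B[t/x]\Rightarrow\Gamma\longrightarrow\Delta,\exists x B$ ($t$ any term); $\exists$-L: $B[c/x],\Gamma\longrightarrow\Delta\Rightarrow\exists x B,\Gamma\longrightarrow\Delta$; $\forall$-R: $\Gamma\longrightarrow\Delta,B[c/x]\Rightarrow\Gamma\longrightarrow\Delta,\forall x B$, where the constant $c$ does not occur in the conclusion. A $\mathbf{C}$-proof is a finite tree of sequents with axioms at the leaves, each internal node being the conclusion of a rule instance whose premises are its children. An $\mathbf{I}$-proof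 is a $\mathbf{C}$-proof in which every sequent has exactly one formula in its succedent. A uniform proof ($\mathbf{O}$-proof) is an $\mathbf{I}$-proof in which any sequent that has a non-atomic formula distinct from $\bot$ in its succedent occurs only as the conclusion of an inference rule that introduces the top-level logical symbol of that formula. A rule "is used" if some instance of that schema occurs in the proof. *)

theory Defs
  imports Main "HOL-Library.Multiset"
begin

text \<open>Function symbols are identified by a name; a constant is a nullary application.
  Loose de Bruijn indices play the role of free variables.\<close>

datatype trm = Var nat | Fn nat "trm list"

datatype fm =
    Atom nat "trm list"
  | TT
  | FF
  | Conj fm fm
  | Disj fm fm
  | Imp fm fm
  | All fm
  | Ex fm

fun liftt :: "trm \<Rightarrow> nat \<Rightarrow> trm" where
  "liftt (Var i) k = (if i < k then Var i else Var (Suc i))"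
| "liftt (Fn f ts) k = Fn f (map (\<lambda>t. liftt t k) ts)"

fun substt :: "trm \<Rightarrow> trm \<Rightarrow> nat \<Rightarrow> trm" where
  "substt (Var i) s k = (if k < i then Var (i - 1) else if i = k then s else Var i)"
| "substt (Fn f ts) s k = Fn f (map (\<lambda>t. substt t s k) ts)"

fun liftf :: "fm \<Rightarrow> nat \<Rightarrow> fm" where
  "liftf (Atom p ts) k = Atom p (map (\<lambda>t. liftt t k) ts)"
| "liftf TT k = TT"
| "liftf FF k = FF"
| "liftf (Conj A B) k = Conj (liftf A k) (liftf B k)"
| "liftf (Disj A B) k = Disj (liftf A k) (liftf B k)"
| "liftf (Imp A B) k = Imp (liftf A k) (liftf B k)"
| "liftf (All A) k = All (liftf A (Suc k))"
| "liftf (Ex A) k = Ex (liftf A (Suc k))"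

fun substf :: "fm \<Rightarrow> trm \<Rightarrow> nat \<Rightarrow> fm" where
  "substf (Atom p ts) s k = Atom p (map (\<lambda>t. substt t s k) ts)"
| "substf TT s k = TT"
| "substf FF s k = FF"
| "substf (Conj A B) s k = Conj (substf A s k) (substf B s k)"
| "substf (Disj A B) s k = Disj (substf A s k) (substf B s k)"
| "substf (Imp A B) s k = Imp (substf A s k) (substf B s k)"
| "substf (All A) s k = All (substf A (liftt s 0) (Suc k))"
| "substf (Ex A) s k = Ex (substf A (liftt s 0) (Suc k))"

text \<open>B[t/x] where B is the body of a quantifier Qx.B\<close>
definition inst :: "fm \<Rightarrow> trm \<Rightarrow> fm" where
  "inst B t = substf B t 0"

fun symst :: "trm \<Rightarrow> (nat \<times> nat) set" where
  "symst (Var i) = {}"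
| "symst (Fn f ts) = insert (f, length ts) (\<Union>t\<in>set ts. symst t)"

fun symsf :: "fm \<Rightarrow> (nat \<times> nat) set" where
  "symsf (Atom p ts) = (\<Union>t\<in>set ts. symst t)"
| "symsf TT = {}"
| "symsf FF = {}"
| "symsf (Conj A B) = symsf A \<union> symsf B"
| "symsf (Disj A B) = symsf A \<union> symsf B"
| "symsf (Imp A B) = symsf A \<union> symsf B"
| "symsf (All A) = symsf A"
| "symsf (Ex A) = symsf A"

fun atomic :: "fm \<Rightarrow> bool" where
  "atomic (Atom p ts) = True"
| "atomic _ = False"

type_synonym seq = "fm multiset \<times> fm multiset"

definition seq_syms :: "seq \<Rightarrow> (nat \<times> nat) set" where
  "seq_syms S = (\<Union>F\<in>set_mset (fst S). symsf F) \<union> (\<Union>F\<in>set_mset (snd S). symsf F)"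

definition is_axiom :: "seq \<Rightarrow> bool" where
  "is_axiom S \<longleftrightarrow> TT \<in># snd S \<or>
     (\<exists>F. (F = FF \<or> atomic F) \<and> F \<in># fst S \<and> F \<in># snd S)"

datatype rule = ContrL | ContrR | BotR | AndL | OrL | AndR | OrR | ImpL | ImpR
  | AllL | ExR | ExL | AllR

inductive rinst :: "rule \<Rightarrow> seq list \<Rightarrow> seq \<Rightarrow> bool" where
  contrL: "rinst ContrL [(add_mset B (add_mset B \<Gamma>), \<Delta>)] (add_mset B \<Gamma>, \<Delta>)"
| contrR: "rinst ContrR [(\<Gamma>, add_mset B (add_mset B \<Delta>))] (\<Gamma>, add_mset B \<Delta>)"
| botR: "rinst BotR [(\<Gamma>, add_mset FF \<Delta>)] (\<Gamma>, add_mset D \<Delta>)"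
| andL1: "rinst AndL [(add_mset B \<Gamma>, \<Delta>)] (add_mset (Conj B D) \<Gamma>, \<Delta>)"
| andL2: "rinst AndL [(add_mset D \<Gamma>, \<Delta>)] (add_mset (Conj B D) \<Gamma>, \<Delta>)"
| orL: "rinst OrL [(add_mset B \<Gamma>, \<Delta>), (add_mset D \<Gamma>, \<Delta>)] (add_mset (Disj B D) \<Gamma>, \<Delta>)"
| andR: "rinst AndR [(\<Gamma>, add_mset B \<Delta>), (\<Gamma>, add_mset D \<Delta>)] (\<Gamma>, add_mset (Conj B D) \<Delta>)"
| orR1: "rinst OrR [(\<Gamma>, add_mset B \<Delta>)] (\<Gamma>, add_mset (Disj B D) \<Delta>)"
| orR2: "rinst OrR [(\<Gamma>, add_mset D \<Delta>)] (\<Gamma>, add_mset (Disj B D) \<Delta>)"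
| impL: "rinst ImpL [(\<Gamma>, add_mset B \<Delta>), (add_mset D \<Gamma>, \<Theta>)]
           (add_mset (Imp B D) \<Gamma>, \<Delta> + \<Theta>)"
| impR: "rinst ImpR [(add_mset B \<Gamma>, add_mset D \<Delta>)] (\<Gamma>, add_mset (Imp B D) \<Delta>)"
| allL: "rinst AllL [(add_mset (inst B t) \<Gamma>, \<Delta>)] (add_mset (All B) \<Gamma>, \<Delta>)"
| exR: "rinst ExR [(\<Gamma>, add_mset (inst B t) \<Delta>)] (\<Gamma>, add_mset (Ex B) \<Delta>)"
| exL: "(c, 0) \<notin> seq_syms (add_mset (Ex B) \<Gamma>, \<Delta>) \<Longrightarrow>
        rinst ExL [(add_mset (inst B (Fn c [])) \<Gamma>, \<Delta>)] (add_mset (Ex B) \<Gamma>, \<Delta>)"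
| allR: "(c, 0) \<notin> seq_syms (\<Gamma>, add_mset (All B) \<Delta>) \<Longrightarrow>
        rinst AllR [(\<Gamma>, add_mset (inst B (Fn c [])) \<Delta>)] (\<Gamma>, add_mset (All B) \<Delta>)"

datatype ptree = Leaf seq | Node rule "ptree list" seq

fun concl :: "ptree \<Rightarrow> seq" where
  "concl (Leaf S) = S"
| "concl (Node r ps S) = S"

fun c_proof :: "ptree \<Rightarrow> bool" where
  "c_proof (Leaf S) = is_axiom S"
| "c_proof (Node r ps S) = (rinst r (map concl ps) S \<and> (\<forall>p\<in>set ps. c_proof p))"

fun sequents :: "ptree \<Rightarrow> seq set" where
  "sequents (Leaf S) = {S}"
| "sequents (Node r ps S) = insert S (\<Union>p\<in>set ps. sequents p)"

fun rules_used :: "ptree \<Rightarrow> rule set" where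
  "rules_used (Leaf S) = {}"
| "rules_used (Node r ps S) = insert r (\<Union>p\<in>set ps. rules_used p)"

definition i_proof :: "ptree \<Rightarrow> bool" where
  "i_proof p \<longleftrightarrow> c_proof p \<and> (\<forall>S\<in>sequents p. size (snd S) = 1)"

text \<open>The right rule introducing the top-level symbol of a (non-atomic, non-bottom) formula.
  For TT, there is no rule; its introduction is the axiom (leaf) with TT in the succedent.\<close>
fun intro_ok :: "fm \<Rightarrow> ptree \<Rightarrow> bool" where
  "intro_ok (Conj A B) p = (\<exists>ps S. p = Node AndR ps S)"
| "intro_ok (Disj A B) p = (\<exists>ps S. p = Node OrR ps S)"
| "intro_ok (Imp A B) p = (\<exists>ps S. p = Node ImpR ps S)"
| "intro_ok (All A) p = (\<exists>ps S. p = Node AllR ps S)"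
| "intro_ok (Ex A) p = (\<exists>ps S. p = Node ExR ps S)"
| "intro_ok TT p = (\<exists>S. p = Leaf S)"
| "intro_ok FF p = True"
| "intro_ok (Atom q ts) p = True"

fun subtrees :: "ptree \<Rightarrow> ptree set" where
  "subtrees (Leaf S) = {Leaf S}"
| "subtrees (Node r ps S) = insert (Node r ps S) (\<Union>p\<in>set ps. subtrees p)"

definition uniform_proof :: "ptree \<Rightarrow> bool" where
  "uniform_proof p \<longleftrightarrow> i_proof p \<and>
     (\<forall>q\<in>subtrees p. \<forall>F. snd (concl q) = {#F#} \<longrightarrow> intro_ok F q)"

end

theory Submission
  imports Defs
begin

(* An I-proof using only rules from R is read as a height-bounded single-succedent derivation
   with rules from R, in which eigenconstants can be renamed freely. Such a derivation is made
   uniform by induction on its height and, for a fixed height, on the size of the goal: a compound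
   goal is decomposed by height-preserving inversion of its right rule, while an atomic or absurd
   goal keeps the last (left) rule, whose premises have smaller height. Conjunction, implication
   and universal quantification are always invertible; a disjunction is invertible if OrL is not
   used, an existential if neither OrL nor ExL is used. In the remaining cases the hypothesis says
   that the matching right rule is not used, so the goal is never decomposed, the derivation is
   closed by BotR, and it proves any other goal as well.

   In each counterexample a uniform proof would have to end with OrR or ExR, and every possible
   premise of that step is refuted by a classical countermodel, since C-proofs are sound. *)

fun rename_trm :: "nat \<Rightarrow> nat \<Rightarrow> trm \<Rightarrow> trm" where
  "rename_trm c d (Var i) = Var i"
| "rename_trm c d (Fn f ts) =
     (if f = c \<and> ts = [] then Fn d [] else Fn f (map (rename_trm c d) ts))"

fun rename_fm :: "nat \<Rightarrow> nat \<Rightarrow> fm \<Rightarrow> fm" where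
  "rename_fm c d (Atom p ts) = Atom p (map (rename_trm c d) ts)"
| "rename_fm c d TT = TT"
| "rename_fm c d FF = FF"
| "rename_fm c d (Conj A B) = Conj (rename_fm c d A) (rename_fm c d B)"
| "rename_fm c d (Disj A B) = Disj (rename_fm c d A) (rename_fm c d B)"
| "rename_fm c d (Imp A B) = Imp (rename_fm c d A) (rename_fm c d B)"
| "rename_fm c d (All A) = All (rename_fm c d A)"
| "rename_fm c d (Ex A) = Ex (rename_fm c d A)"

lemma rename_trm_liftt: "rename_trm c d (liftt s k) = liftt (rename_trm c d s) k"
  by (induction s k rule: liftt.induct) auto

lemma rename_trm_substt:
  "rename_trm c d (substt t s k) = substt (rename_trm c d t) (rename_trm c d s) k"
  by (induction t s k rule: substt.induct) auto

lemma rename_fm_substf: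
  "rename_fm c d (substf A s k) = substf (rename_fm c d A) (rename_trm c d s) k"
  by (induction A arbitrary: s k) (auto simp: rename_trm_substt rename_trm_liftt)

lemma rename_fm_inst: "rename_fm c d (inst B t) = inst (rename_fm c d B) (rename_trm c d t)"
  by (simp add: inst_def rename_fm_substf)

lemma rename_trm_fresh: "(c, 0) \<notin> symst t \<Longrightarrow> rename_trm c d t = t"
  by (induction t) (auto simp: map_idI)

lemma rename_fm_fresh: "(c, 0) \<notin> symsf A \<Longrightarrow> rename_fm c d A = A"
  by (induction A) (auto simp: rename_trm_fresh map_idI)

lemma rename_mset_fresh:
  "\<forall>A\<in>#\<Gamma>. (c, 0) \<notin> symsf A \<Longrightarrow> image_mset (rename_fm c d) \<Gamma> = \<Gamma>"
  by (induction \<Gamma>) (auto simp: rename_fm_fresh)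

lemma rename_fm_inst_fresh:
  "(c, 0) \<notin> symsf B \<Longrightarrow> rename_fm c d (inst B (Fn c [])) = inst B (Fn d [])"
  by (simp add: rename_fm_inst rename_fm_fresh)

lemma atomic_rename_fm [simp]: "atomic (rename_fm c d A) = atomic A"
  by (cases A) auto

lemma symst_liftt [simp]: "symst (liftt t k) = symst t"
  by (induction t k rule: liftt.induct) auto

lemma symst_substt: "symst (substt t s k) \<subseteq> symst t \<union> symst s"
  by (induction t s k rule: substt.induct) auto

lemma symsf_substf: "symsf (substf A s k) \<subseteq> symsf A \<union> symst s"
proof (induction A arbitrary: s k)
  case (Atom p ts)
  then show ?case using symst_substt by fastforce
qed fastforce+

lemma symsf_inst_const: "symsf (inst B (Fn c [])) \<subseteq> insert (c, 0) (symsf B)"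
  using symsf_substf[of B "Fn c []" 0] by (auto simp: inst_def)

lemma finite_symst [simp]: "finite (symst t)"
  by (induction t) auto

lemma finite_symsf [simp]: "finite (symsf A)"
  by (induction A) auto

lemma finite_seq_syms [simp]: "finite (seq_syms S)"
  by (simp add: seq_syms_def)

lemma ex_fresh_const:
  "finite L \<Longrightarrow> finite X \<Longrightarrow> \<exists>c. c \<notin> L \<and> (c, 0) \<notin> (X :: (nat \<times> nat) set)"
  using ex_new_if_finite[OF infinite_UNIV_nat, of "L \<union> fst ` X"] by force

section \<open>Height-bounded single-succedent derivations\<close>

text \<open>The eigenconstant of \<open>ex_l\<close> and \<open>all_r\<close> is quantified cofinitely, which makes
  renaming and weakening admissible without freshness side conditions.\<close>

inductive derivable :: "rule set \<Rightarrow> nat \<Rightarrow> fm multiset \<Rightarrow> fm \<Rightarrow> bool" for R where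
  ax: "is_axiom (\<Gamma>, {#G#}) \<Longrightarrow> derivable R n \<Gamma> G"
| contr_l: "ContrL \<in> R \<Longrightarrow> derivable R n (add_mset B (add_mset B \<Gamma>)) G \<Longrightarrow>
    derivable R (Suc n) (add_mset B \<Gamma>) G"
| bot_r: "BotR \<in> R \<Longrightarrow> derivable R n \<Gamma> FF \<Longrightarrow> derivable R (Suc n) \<Gamma> D"
| and_l1: "AndL \<in> R \<Longrightarrow> derivable R n (add_mset B \<Gamma>) G \<Longrightarrow>
    derivable R (Suc n) (add_mset (Conj B D) \<Gamma>) G"
| and_l2: "AndL \<in> R \<Longrightarrow> derivable R n (add_mset D \<Gamma>) G \<Longrightarrow>
    derivable R (Suc n) (add_mset (Conj B D) \<Gamma>) G"
| or_l: "OrL \<in> R \<Longrightarrow> derivable R n (add_mset B \<Gamma>) G \<Longrightarrow> derivable R n (add_mset D \<Gamma>) G \<Longrightarrow>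
    derivable R (Suc n) (add_mset (Disj B D) \<Gamma>) G"
| and_r: "AndR \<in> R \<Longrightarrow> derivable R n \<Gamma> B \<Longrightarrow> derivable R n \<Gamma> D \<Longrightarrow>
    derivable R (Suc n) \<Gamma> (Conj B D)"
| or_r1: "OrR \<in> R \<Longrightarrow> derivable R n \<Gamma> B \<Longrightarrow> derivable R (Suc n) \<Gamma> (Disj B D)"
| or_r2: "OrR \<in> R \<Longrightarrow> derivable R n \<Gamma> D \<Longrightarrow> derivable R (Suc n) \<Gamma> (Disj B D)"
| imp_l: "ImpL \<in> R \<Longrightarrow> derivable R n \<Gamma> B \<Longrightarrow> derivable R n (add_mset D \<Gamma>) G \<Longrightarrow>
    derivable R (Suc n) (add_mset (Imp B D) \<Gamma>) G"
| imp_r: "ImpR \<in> R \<Longrightarrow> derivable R n (add_mset B \<Gamma>) D \<Longrightarrow> derivable R (Suc n) \<Gamma> (Imp B D)"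
| all_l: "AllL \<in> R \<Longrightarrow> derivable R n (add_mset (inst B t) \<Gamma>) G \<Longrightarrow>
    derivable R (Suc n) (add_mset (All B) \<Gamma>) G"
| ex_r: "ExR \<in> R \<Longrightarrow> derivable R n \<Gamma> (inst B t) \<Longrightarrow> derivable R (Suc n) \<Gamma> (Ex B)"
| ex_l: "ExL \<in> R \<Longrightarrow> finite L \<Longrightarrow>
    (\<And>c. c \<notin> L \<Longrightarrow> derivable R n (add_mset (inst B (Fn c [])) \<Gamma>) G) \<Longrightarrow>
    derivable R (Suc n) (add_mset (Ex B) \<Gamma>) G"
| all_r: "AllR \<in> R \<Longrightarrow> finite L \<Longrightarrow>
    (\<And>c. c \<notin> L \<Longrightarrow> derivable R n \<Gamma> (inst B (Fn c []))) \<Longrightarrow>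
    derivable R (Suc n) \<Gamma> (All B)"

lemma derivable_Suc: "derivable R n \<Gamma> G \<Longrightarrow> derivable R (Suc n) \<Gamma> G"
  by (induction rule: derivable.induct) (auto intro: derivable.intros)

lemma derivable_mono:
  assumes "derivable R n \<Gamma> G" and "n \<le> m"
  shows "derivable R m \<Gamma> G"
  using assms(2,1) by (induction m rule: dec_induct) (auto intro: derivable_Suc)

lemma is_axiom_rename:
  "is_axiom (\<Gamma>, {#G#}) \<Longrightarrow> is_axiom (image_mset (rename_fm c d) \<Gamma>, {#rename_fm c d G#})"
  unfolding is_axiom_def by (auto; metis rename_fm.simps(3) atomic_rename_fm image_eqI)

lemma derivable_rename:
  "derivable R n \<Gamma> G \<Longrightarrow> derivable R n (image_mset (rename_fm c d) \<Gamma>) (rename_fm c d G)"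
proof (induction rule: derivable.induct)
  case (ex_l L n B \<Gamma> G)
  have "derivable R n (add_mset (inst (rename_fm c d B) (Fn e [])) (image_mset (rename_fm c d) \<Gamma>))
      (rename_fm c d G)" if "e \<notin> insert c L" for e
    using ex_l.IH[of e] that by (simp add: rename_fm_inst)
  then show ?case using ex_l.hyps by (auto intro!: derivable.ex_l[where L="insert c L"])
next
  case (all_r L n \<Gamma> B)
  have "derivable R n (image_mset (rename_fm c d) \<Gamma>) (inst (rename_fm c d B) (Fn e []))"
    if "e \<notin> insert c L" for e
    using all_r.IH[of e] that by (simp add: rename_fm_inst)
  then show ?case using all_r.hyps by (auto intro!: derivable.all_r[where L="insert c L"])
qed (auto intro: derivable.intros is_axiom_rename simp: rename_fm_inst)

lemma derivable_rename_eigen_l: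
  assumes "derivable R n (add_mset (inst B (Fn c [])) \<Gamma>) G"
    and "(c, 0) \<notin> seq_syms (add_mset (Ex B) \<Gamma>, {#G#})"
  shows "derivable R n (add_mset (inst B (Fn d [])) \<Gamma>) G"
proof -
  have "(c, 0) \<notin> symsf B" "\<forall>A\<in>#\<Gamma>. (c, 0) \<notin> symsf A" "(c, 0) \<notin> symsf G"
    using assms(2) by (auto simp: seq_syms_def)
  then show ?thesis
    using derivable_rename[OF assms(1), of c d]
    by (simp add: rename_fm_inst_fresh rename_mset_fresh rename_fm_fresh)
qed

lemma derivable_rename_eigen_r:
  assumes "derivable R n \<Gamma> (inst B (Fn c []))"
    and "(c, 0) \<notin> seq_syms (\<Gamma>, {#All B#})"
  shows "derivable R n \<Gamma> (inst B (Fn d []))"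
proof -
  have "(c, 0) \<notin> symsf B" "\<forall>A\<in>#\<Gamma>. (c, 0) \<notin> symsf A"
    using assms(2) by (auto simp: seq_syms_def)
  then show ?thesis
    using derivable_rename[OF assms(1), of c d] by (simp add: rename_fm_inst_fresh rename_mset_fresh)
qed

lemma derivable_ex_l_fresh:
  assumes "ExL \<in> R" and "(c, 0) \<notin> seq_syms (add_mset (Ex B) \<Gamma>, {#G#})"
    and "derivable R n (add_mset (inst B (Fn c [])) \<Gamma>) G"
  shows "derivable R (Suc n) (add_mset (Ex B) \<Gamma>) G"
  using assms(1) derivable_rename_eigen_l[OF assms(3,2)] by (intro derivable.ex_l[where L="{}"]) auto

lemma derivable_all_r_fresh:
  assumes "AllR \<in> R" and "(c, 0) \<notin> seq_syms (\<Gamma>, {#All B#})"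
    and "derivable R n \<Gamma> (inst B (Fn c []))"
  shows "derivable R (Suc n) \<Gamma> (All B)"
  using assms(1) derivable_rename_eigen_r[OF assms(3,2)] by (intro derivable.all_r[where L="{}"]) auto

lemma derivable_weaken_union: "derivable R n \<Gamma> G \<Longrightarrow> derivable R n (\<Gamma> + \<Delta>) G"
proof (induction rule: derivable.induct)
  case (ex_l L n B \<Gamma> G)
  then show ?case by (auto intro!: derivable.ex_l[where L=L])
qed (auto simp: is_axiom_def intro: derivable.intros)

section \<open>Inversion\<close>

lemma derivable_Conj_inv:
  "derivable R n \<Gamma> (Conj A B) \<Longrightarrow> derivable R n \<Gamma> A \<and> derivable R n \<Gamma> B"
proof (induction n \<Gamma> "Conj A B" rule: derivable.induct)
  case (ex_l L n D \<Gamma>)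
  then show ?case by (auto intro!: derivable.ex_l[where L=L])
qed (auto simp: is_axiom_def intro: derivable.intros derivable_mono)

lemma derivable_Imp_inv:
  assumes "derivable R n \<Gamma> (Imp A B)"
  shows "derivable R n (add_mset A \<Gamma>) B"
proof -
  \<comment> \<open>\<open>A\<close> is kept at the end of the antecedent, so that it never hides the principal formula
    of a left rule.\<close>
  have "derivable R n (\<Gamma> + {#A#}) B"
    using assms
  proof (induction n \<Gamma> "Imp A B" rule: derivable.induct)
    case (ex_l L n D \<Gamma>)
    then show ?case by (auto intro!: derivable.ex_l[where L=L] simp del: union_mset_add_mset_right)
  next
    case (imp_r n \<Gamma>)
    then show ?case by (simp add: derivable_Suc)
  qed (auto simp: is_axiom_def intro: derivable.intros derivable_weaken_union derivable_mono
        simp del: union_mset_add_mset_right)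
  then show ?thesis by simp
qed

lemma derivable_Disj_inv:
  "derivable R n \<Gamma> (Disj A B) \<Longrightarrow> OrL \<notin> R \<Longrightarrow> derivable R n \<Gamma> A \<or> derivable R n \<Gamma> B"
proof (induction n \<Gamma> "Disj A B" rule: derivable.induct)
  case (ex_l L n D \<Gamma>)
  obtain c where c: "c \<notin> L" "(c, 0) \<notin> seq_syms (add_mset (Ex D) \<Gamma>, {#Disj A B#})"
    using ex_fresh_const[OF ex_l.hyps(2) finite_seq_syms] by blast
  then have "(c, 0) \<notin> seq_syms (add_mset (Ex D) \<Gamma>, {#A#})" "(c, 0) \<notin> seq_syms (add_mset (Ex D) \<Gamma>, {#B#})"
    by (auto simp: seq_syms_def)
  then show ?case
    using ex_l.hyps(4)[OF c(1) ex_l.prems] derivable_ex_l_fresh[OF ex_l.hyps(1)] by blast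
qed (auto simp: is_axiom_def intro: derivable.intros derivable_mono)

lemma derivable_Ex_inv:
  "derivable R n \<Gamma> (Ex B) \<Longrightarrow> OrL \<notin> R \<Longrightarrow> ExL \<notin> R \<Longrightarrow> \<exists>t. derivable R n \<Gamma> (inst B t)"
  by (induction n \<Gamma> "Ex B" rule: derivable.induct)
    (auto simp: is_axiom_def intro: derivable.intros derivable_Suc)

lemma derivable_All_inv:
  "derivable R n \<Gamma> (All B) \<Longrightarrow> (c, 0) \<notin> seq_syms (\<Gamma>, {#All B#}) \<Longrightarrow>
    derivable R n \<Gamma> (inst B (Fn c []))"
proof (induction n \<Gamma> "All B" arbitrary: c rule: derivable.induct)
  case (all_r L n \<Gamma>)
  obtain e where "e \<notin> L" "(e, 0) \<notin> seq_syms (\<Gamma>, {#All B#})"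
    using ex_fresh_const[OF all_r.hyps(2) finite_seq_syms] by blast
  then show ?case
    using all_r.hyps(3) derivable_rename_eigen_r derivable_Suc by blast
next
  case (all_l n D t \<Gamma>)
  obtain e where e: "(e, 0) \<notin> seq_syms (add_mset (inst D t) (add_mset (All D) \<Gamma>), {#All B#})"
    using ex_fresh_const[OF finite.emptyI finite_seq_syms] by blast
  then have "derivable R n (add_mset (inst D t) \<Gamma>) (inst B (Fn e []))"
    using all_l.hyps(3) by (auto simp: seq_syms_def)
  then have "derivable R (Suc n) (add_mset (All D) \<Gamma>) (inst B (Fn e []))"
    using all_l.hyps(1) by (rule derivable.all_l[rotated])
  then show ?case
    by (rule derivable_rename_eigen_r) (use e in \<open>auto simp: seq_syms_def\<close>)
next
  case (ex_l L n D \<Gamma>)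
  have "derivable R n (add_mset (inst D (Fn e [])) \<Gamma>) (inst B (Fn c []))" if "e \<notin> insert c L" for e
  proof -
    have "(c, 0) \<notin> symsf (inst D (Fn e []))"
      using symsf_inst_const[of D e] that ex_l.prems by (auto simp: seq_syms_def)
    then show ?thesis
      using ex_l.hyps(4)[of e c] that ex_l.prems by (auto simp: seq_syms_def)
  qed
  then show ?case
    using ex_l.hyps(1,2) by (intro derivable.ex_l[where L="insert c L"]) auto
qed (auto simp: seq_syms_def is_axiom_def intro: derivable.intros)

text \<open>Without its right rule the goal is never decomposed; it is only passed on to premises and
  finally discharged by \<open>bot_r\<close>.\<close>

lemma derivable_any_goal:
  assumes "derivable R n \<Gamma> G"
    and "(\<exists>A B. G = Disj A B \<and> OrR \<notin> R) \<or> (\<exists>B. G = Ex B \<and> ExR \<notin> R)"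
  shows "derivable R n \<Gamma> G'"
  using assms
proof (induction arbitrary: G' rule: derivable.induct)
  case (ex_l L n D \<Gamma> G)
  then show ?case by (auto intro!: derivable.ex_l[where L=L])
qed (auto simp: is_axiom_def intro: derivable.intros)

lemma finite_common_bound:
  assumes "finite A" and "\<forall>x\<in>A. \<exists>n::nat. P n x" and "\<And>n m x. P n x \<Longrightarrow> n \<le> m \<Longrightarrow> P m x"
  shows "\<exists>N. \<forall>x\<in>A. P N x"
proof -
  obtain f where f: "\<forall>x\<in>A. P (f x) x" using assms(2) by metis
  have "f x \<le> Max (f ` A)" if "x \<in> A" for x
    using assms(1) that by simp
  then show ?thesis using f assms(3) by blast
qed

lemma concl_in_sequents: "concl p \<in> sequents p"
  by (cases p) auto

lemma derivable_rule_step: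
  assumes "rinst r Ss (\<Gamma>, {#G#})" and r: "r \<in> R"
    and single: "\<forall>S\<in>set Ss. size (snd S) = 1"
    and prem: "\<And>\<Gamma>' G'. (\<Gamma>', {#G'#}) \<in> set Ss \<Longrightarrow> derivable R n \<Gamma>' G'"
  shows "derivable R (Suc n) \<Gamma> G"
  using assms(1)
proof cases
  case (contrL B \<Gamma>')
  then show ?thesis using prem[of "add_mset B (add_mset B \<Gamma>')" G] r by (auto intro: derivable.contr_l)
next
  case (contrR B \<Delta>)
  then show ?thesis using single by simp
next
  case (botR \<Delta> D)
  then show ?thesis using prem[of \<Gamma> FF] r by (auto intro: derivable.bot_r)
next
  case (andL1 B \<Gamma>' D)
  then show ?thesis using prem[of "add_mset B \<Gamma>'" G] r by (auto intro: derivable.and_l1)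
next
  case (andL2 D \<Gamma>' B)
  then show ?thesis using prem[of "add_mset D \<Gamma>'" G] r by (auto intro: derivable.and_l2)
next
  case (orL B \<Gamma>' D)
  then show ?thesis using prem[of "add_mset B \<Gamma>'" G] prem[of "add_mset D \<Gamma>'" G] r
    by (auto intro: derivable.or_l)
next
  case (andR B \<Delta> D)
  then show ?thesis using prem[of \<Gamma> B] prem[of \<Gamma> D] r by (auto intro: derivable.and_r)
next
  case (orR1 B \<Delta> D)
  then show ?thesis using prem[of \<Gamma> B] r by (auto intro: derivable.or_r1)
next
  case (orR2 D \<Delta> B)
  then show ?thesis using prem[of \<Gamma> D] r by (auto intro: derivable.or_r2)
next
  case (impL \<Gamma>' B \<Delta> D \<Theta>)
  then have "\<Delta> = {#}" using single by simp
  then show ?thesis using impL prem[of \<Gamma>' B] prem[of "add_mset D \<Gamma>'" G] r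
    by (auto intro: derivable.imp_l)
next
  case (impR B D \<Delta>)
  then show ?thesis using prem[of "add_mset B \<Gamma>" D] r by (auto intro: derivable.imp_r)
next
  case (allL B t \<Gamma>')
  then show ?thesis using prem[of "add_mset (inst B t) \<Gamma>'" G] r by (auto intro: derivable.all_l)
next
  case (exR B t \<Delta>)
  then show ?thesis using prem[of \<Gamma> "inst B t"] r by (auto intro: derivable.ex_r)
next
  case (exL c B \<Gamma>')
  then show ?thesis using prem[of "add_mset (inst B (Fn c [])) \<Gamma>'" G] r
    by (auto intro: derivable_ex_l_fresh)
next
  case (allR c B \<Delta>)
  then show ?thesis using prem[of \<Gamma> "inst B (Fn c [])"] r by (auto intro: derivable_all_r_fresh)
qed

lemma single_succedent_proof_derivable:
  "c_proof p \<Longrightarrow> \<forall>S\<in>sequents p. size (snd S) = 1 \<Longrightarrow> rules_used p \<subseteq> R \<Longrightarrow>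
    concl p = (\<Gamma>, {#G#}) \<Longrightarrow> \<exists>n. derivable R n \<Gamma> G"
proof (induction p arbitrary: \<Gamma> G)
  case (Leaf S)
  then show ?case by (auto intro: derivable.ax)
next
  case (Node r ps S)
  have single: "\<forall>S\<in>set (map concl ps). size (snd S) = 1"
    using Node.prems(2) concl_in_sequents by fastforce
  have IH: "\<exists>n. derivable R n \<Gamma>' G'" if "p \<in> set ps" and "concl p = (\<Gamma>', {#G'#})" for p \<Gamma>' G'
    using Node.IH[OF that(1) _ _ _ that(2)] Node.prems that(1) by (auto simp: UN_subset_iff)
  have "\<exists>N. \<forall>S\<in>set (map concl ps). \<forall>\<Gamma>' G'. S = (\<Gamma>', {#G'#}) \<longrightarrow> derivable R N \<Gamma>' G'"
  proof (rule finite_common_bound)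
    show "\<forall>S\<in>set (map concl ps). \<exists>n. \<forall>\<Gamma>' G'. S = (\<Gamma>', {#G'#}) \<longrightarrow> derivable R n \<Gamma>' G'"
    proof
      fix S assume S: "S \<in> set (map concl ps)"
      then obtain \<Gamma>' G' where "S = (\<Gamma>', {#G'#})"
        using single size_1_singleton_mset by (metis prod.collapse)
      then show "\<exists>n. \<forall>\<Gamma>' G'. S = (\<Gamma>', {#G'#}) \<longrightarrow> derivable R n \<Gamma>' G'"
        using IH S by auto
    qed
  qed (auto intro: derivable_mono)
  then obtain N where "\<And>\<Gamma>' G'. (\<Gamma>', {#G'#}) \<in> set (map concl ps) \<Longrightarrow> derivable R N \<Gamma>' G'"
    by blast
  moreover have "rinst r (map concl ps) (\<Gamma>, {#G#})" and "r \<in> R"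
    using Node.prems by auto
  ultimately show ?case using derivable_rule_step single by blast
qed

definition uniformly_provable :: "seq \<Rightarrow> bool" where
  "uniformly_provable S \<longleftrightarrow> (\<exists>q. uniform_proof q \<and> concl q = S)"

definition atomic_or_bot :: "fm \<Rightarrow> bool" where
  "atomic_or_bot G \<longleftrightarrow> atomic G \<or> G = FF"

lemma intro_ok_atomic_or_bot: "atomic_or_bot G \<Longrightarrow> intro_ok G q"
  by (cases G) (auto simp: atomic_or_bot_def)

lemma ex_map_conv_pred:
  "\<forall>y\<in>set ys. \<exists>x. P x \<and> f x = y \<Longrightarrow> \<exists>xs. map f xs = ys \<and> (\<forall>x\<in>set xs. P x)"
proof (induction ys)
  case (Cons y ys)
  then obtain x xs where "P x" "f x = y" "map f xs = ys" "\<forall>x\<in>set xs. P x" by auto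
  then show ?case by (intro exI[of _ "x # xs"]) auto
qed simp

lemma uniformly_provable_axiom: "is_axiom (\<Gamma>, {#G#}) \<Longrightarrow> uniformly_provable (\<Gamma>, {#G#})"
  unfolding uniformly_provable_def uniform_proof_def i_proof_def
  by (intro exI[of _ "Leaf (\<Gamma>, {#G#})"]) (cases G; auto simp: is_axiom_def)

lemma uniformly_provable_rule:
  assumes "rinst r Ss (\<Gamma>, {#G#})" and "\<forall>S\<in>set Ss. uniformly_provable S"
    and "\<And>qs. intro_ok G (Node r qs (\<Gamma>, {#G#}))"
  shows "uniformly_provable (\<Gamma>, {#G#})"
proof -
  obtain qs where qs: "map concl qs = Ss" "\<forall>q\<in>set qs. uniform_proof q"
    using ex_map_conv_pred[of Ss uniform_proof concl] assms(2)
    unfolding uniformly_provable_def by blast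
  have "uniform_proof (Node r qs (\<Gamma>, {#G#}))"
    using qs assms(1,3) unfolding uniform_proof_def i_proof_def by auto
  then show ?thesis unfolding uniformly_provable_def by fastforce
qed

lemma uniformly_provable_atomic_or_bot:
  assumes IH: "\<And>m \<Gamma> G. m < n \<Longrightarrow> derivable R m \<Gamma> G \<Longrightarrow> uniformly_provable (\<Gamma>, {#G#})"
    and "derivable R n \<Gamma> G" and G: "atomic_or_bot G"
  shows "uniformly_provable (\<Gamma>, {#G#})"
  using assms(2)
proof cases
  case ax
  then show ?thesis by (rule uniformly_provable_axiom)
next
  case (contr_l m B \<Gamma>')
  then show ?thesis
    using IH[of m] G by (auto intro!: uniformly_provable_rule[OF rinst.contrL] intro_ok_atomic_or_bot)
next
  case (bot_r m)
  then show ?thesis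
    using IH[of m] G by (auto intro!: uniformly_provable_rule[OF rinst.botR] intro_ok_atomic_or_bot)
next
  case (and_l1 m B \<Gamma>' D)
  then show ?thesis
    using IH[of m] G by (auto intro!: uniformly_provable_rule[OF rinst.andL1] intro_ok_atomic_or_bot)
next
  case (and_l2 m D \<Gamma>' B)
  then show ?thesis
    using IH[of m] G by (auto intro!: uniformly_provable_rule[OF rinst.andL2] intro_ok_atomic_or_bot)
next
  case (or_l m B \<Gamma>' D)
  then show ?thesis
    using IH[of m] G by (auto intro!: uniformly_provable_rule[OF rinst.orL] intro_ok_atomic_or_bot)
next
  case (imp_l m B D \<Gamma>')
  then show ?thesis
    using IH[of m] G
    by (auto intro!: uniformly_provable_rule[OF rinst.impL[of _ _ "{#}", simplified]] intro_ok_atomic_or_bot)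
next
  case (all_l m B t \<Gamma>')
  then show ?thesis
    using IH[of m] G by (auto intro!: uniformly_provable_rule[OF rinst.allL[where t=t]] intro_ok_atomic_or_bot)
next
  case (ex_l L m B \<Gamma>')
  obtain c where "c \<notin> L" and fresh: "(c, 0) \<notin> seq_syms (add_mset (Ex B) \<Gamma>', {#G#})"
    using ex_fresh_const[OF \<open>finite L\<close> finite_seq_syms] by blast
  then show ?thesis
    using ex_l IH[of m] G
    by (auto intro!: uniformly_provable_rule[OF rinst.exL[OF fresh]] intro_ok_atomic_or_bot)
qed (use G in \<open>auto simp: atomic_or_bot_def\<close>)

definition uniformizable :: "rule set \<Rightarrow> bool" where
  "uniformizable R \<longleftrightarrow>
     (OrL \<notin> R \<or> (OrR \<notin> R \<and> ExR \<notin> R)) \<and> (ExL \<notin> R \<or> ExR \<notin> R)"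

lemma size_inst [simp]: "size (inst B t) = size B"
proof -
  have "size (substf B t k) = size B" for k
    by (induction B arbitrary: t k) auto
  then show ?thesis by (simp add: inst_def)
qed

lemma uniformly_provable_step:
  assumes IH: "\<And>m \<Gamma> G. m < n \<Longrightarrow> derivable R m \<Gamma> G \<Longrightarrow> uniformly_provable (\<Gamma>, {#G#})"
    and R: "uniformizable R"
  shows "derivable R n \<Gamma> G \<Longrightarrow> uniformly_provable (\<Gamma>, {#G#})"
proof (induction G arbitrary: \<Gamma> rule: measure_induct_rule[of size])
  case (less G)
  have smaller: "uniformly_provable (\<Gamma>', {#A#})"
    if "size A < size G" and "derivable R n \<Gamma>' A" for A \<Gamma>'
    using less.IH that by blast
  show ?case
  proof (cases G)
    case (Atom p ts)
    then show ?thesis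
      using uniformly_provable_atomic_or_bot[OF IH less.prems] by (simp add: atomic_or_bot_def)
  next
    case TT
    then show ?thesis by (simp add: uniformly_provable_axiom is_axiom_def)
  next
    case FF
    then show ?thesis
      using uniformly_provable_atomic_or_bot[OF IH less.prems] by (simp add: atomic_or_bot_def)
  next
    case (Conj A B)
    then have "uniformly_provable (\<Gamma>, {#A#})" "uniformly_provable (\<Gamma>, {#B#})"
      using derivable_Conj_inv[of R n \<Gamma> A B] less.prems smaller by auto
    then show ?thesis
      unfolding Conj by (intro uniformly_provable_rule[OF rinst.andR[where \<Delta>="{#}"]]) auto
  next
    case (Imp A B)
    then have "uniformly_provable (add_mset A \<Gamma>, {#B#})"
      using derivable_Imp_inv[of R n \<Gamma> A B] less.prems smaller by auto
    then show ?thesis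
      unfolding Imp by (intro uniformly_provable_rule[OF rinst.impR[where \<Delta>="{#}"]]) auto
  next
    case (Disj A B)
    have "derivable R n \<Gamma> A \<or> derivable R n \<Gamma> B"
    proof (cases "OrL \<in> R")
      case True
      then have "OrR \<notin> R" using R by (simp add: uniformizable_def)
      then show ?thesis using derivable_any_goal[of R n \<Gamma> G A] less.prems Disj by simp
    qed (use derivable_Disj_inv less.prems Disj in simp)
    then have "uniformly_provable (\<Gamma>, {#A#}) \<or> uniformly_provable (\<Gamma>, {#B#})"
      using smaller Disj by auto
    then show ?thesis
      unfolding Disj
      by (elim disjE; intro uniformly_provable_rule[OF rinst.orR1[where \<Delta>="{#}"]]
          uniformly_provable_rule[OF rinst.orR2[where \<Delta>="{#}"]]; simp)
  next
    case (Ex B)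
    have "\<exists>t. derivable R n \<Gamma> (inst B t)"
    proof (cases "OrL \<in> R \<or> ExL \<in> R")
      case True
      then have "ExR \<notin> R" using R by (auto simp: uniformizable_def)
      then show ?thesis using derivable_any_goal[of R n \<Gamma> G "inst B t" for t] less.prems Ex by simp
    qed (use derivable_Ex_inv less.prems Ex in simp)
    then obtain t where "derivable R n \<Gamma> (inst B t)" ..
    then have "uniformly_provable (\<Gamma>, {#inst B t#})"
      using smaller Ex by simp
    then show ?thesis
      unfolding Ex by (intro uniformly_provable_rule[OF rinst.exR[where \<Delta>="{#}"]]) auto
  next
    case (All B)
    obtain c where c: "(c, 0) \<notin> seq_syms (\<Gamma>, {#All B#})"
      using ex_fresh_const[OF finite.emptyI finite_seq_syms] by blast
    then have "uniformly_provable (\<Gamma>, {#inst B (Fn c [])#})"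
      using derivable_All_inv less.prems All smaller by simp
    then show ?thesis
      unfolding All by (intro uniformly_provable_rule[OF rinst.allR[OF c]]) auto
  qed
qed

lemma derivable_uniformly_provable:
  "uniformizable R \<Longrightarrow> derivable R n \<Gamma> G \<Longrightarrow> uniformly_provable (\<Gamma>, {#G#})"
proof (induction n arbitrary: \<Gamma> G rule: less_induct)
  case (less n)
  then show ?case using uniformly_provable_step by blast
qed

lemma uniformly_provable_if_i_proof:
  assumes "i_proof p" and "concl p = (\<Gamma>, {#G#})" and "uniformizable (rules_used p)"
  shows "uniformly_provable (\<Gamma>, {#G#})"
proof -
  obtain n where "derivable (rules_used p) n \<Gamma> G"
    using single_succedent_proof_derivable assms(1,2) unfolding i_proof_def by blast
  then show ?thesis using derivable_uniformly_provable assms(3) by blast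
qed

section \<open>Classical soundness\<close>

fun eval_trm :: "(nat \<Rightarrow> 'a list \<Rightarrow> 'a) \<Rightarrow> (nat \<Rightarrow> 'a) \<Rightarrow> trm \<Rightarrow> 'a" where
  "eval_trm F e (Var i) = e i"
| "eval_trm F e (Fn f ts) = F f (map (eval_trm F e) ts)"

definition shift :: "(nat \<Rightarrow> 'a) \<Rightarrow> nat \<Rightarrow> 'a \<Rightarrow> nat \<Rightarrow> 'a" (\<open>_\<langle>_:_\<rangle>\<close> [90, 0, 0] 91) where
  "e\<langle>k:x\<rangle> = (\<lambda>i. if i < k then e i else if i = k then x else e (i - 1))"

lemma shift_commute: "e\<langle>k:y\<rangle>\<langle>0:x\<rangle> = e\<langle>0:x\<rangle>\<langle>Suc k:y\<rangle>"
  by (auto simp: shift_def fun_eq_iff)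

fun eval_fm :: "(nat \<Rightarrow> 'a list \<Rightarrow> 'a) \<Rightarrow> (nat \<Rightarrow> 'a list \<Rightarrow> bool) \<Rightarrow> (nat \<Rightarrow> 'a) \<Rightarrow> fm \<Rightarrow> bool" where
  "eval_fm F P e (Atom p ts) = P p (map (eval_trm F e) ts)"
| "eval_fm F P e TT = True"
| "eval_fm F P e FF = False"
| "eval_fm F P e (Conj A B) = (eval_fm F P e A \<and> eval_fm F P e B)"
| "eval_fm F P e (Disj A B) = (eval_fm F P e A \<or> eval_fm F P e B)"
| "eval_fm F P e (Imp A B) = (eval_fm F P e A \<longrightarrow> eval_fm F P e B)"
| "eval_fm F P e (All A) = (\<forall>x. eval_fm F P (e\<langle>0:x\<rangle>) A)"
| "eval_fm F P e (Ex A) = (\<exists>x. eval_fm F P (e\<langle>0:x\<rangle>) A)"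

lemma eval_trm_liftt: "eval_trm F (e\<langle>k:x\<rangle>) (liftt t k) = eval_trm F e t"
  by (induction t k rule: liftt.induct) (auto simp: shift_def cong: map_cong)

lemma eval_trm_substt: "eval_trm F e (substt t s k) = eval_trm F (e\<langle>k:eval_trm F e s\<rangle>) t"
  by (induction t s k rule: substt.induct) (auto simp: shift_def cong: map_cong)

lemma eval_fm_substf: "eval_fm F P e (substf A s k) = eval_fm F P (e\<langle>k:eval_trm F e s\<rangle>) A"
  by (induction A arbitrary: e s k)
    (auto simp: eval_trm_substt eval_trm_liftt shift_commute cong: map_cong)

lemma eval_fm_inst: "eval_fm F P e (inst B t) = eval_fm F P (e\<langle>0:eval_trm F e t\<rangle>) B"
  by (simp add: inst_def eval_fm_substf)

definition set_const :: "(nat \<Rightarrow> 'a list \<Rightarrow> 'a) \<Rightarrow> nat \<Rightarrow> 'a \<Rightarrow> nat \<Rightarrow> 'a list \<Rightarrow> 'a" where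
  "set_const F c x = (\<lambda>f ts. if f = c \<and> ts = [] then x else F f ts)"

lemma eval_trm_set_const: "(c, 0) \<notin> symst t \<Longrightarrow> eval_trm (set_const F c x) e t = eval_trm F e t"
  by (induction t) (auto simp: set_const_def cong: map_cong)

lemma eval_fm_set_const: "(c, 0) \<notin> symsf A \<Longrightarrow> eval_fm (set_const F c x) P e A = eval_fm F P e A"
  by (induction A arbitrary: e) (auto simp: eval_trm_set_const cong: map_cong)

lemma eval_fm_inst_set_const:
  "(c, 0) \<notin> symsf B \<Longrightarrow> eval_fm (set_const F c x) P e (inst B (Fn c [])) = eval_fm F P (e\<langle>0:x\<rangle>) B"
  by (simp add: eval_fm_inst eval_fm_set_const) (simp add: set_const_def)

definition sat_seq :: "(nat \<Rightarrow> 'a list \<Rightarrow> 'a) \<Rightarrow> (nat \<Rightarrow> 'a list \<Rightarrow> bool) \<Rightarrow> (nat \<Rightarrow> 'a) \<Rightarrow> seq \<Rightarrow> bool" where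
  "sat_seq F P e S \<longleftrightarrow> (\<forall>A\<in>#fst S. eval_fm F P e A) \<longrightarrow> (\<exists>B\<in>#snd S. eval_fm F P e B)"

lemma c_proof_sound: "c_proof p \<Longrightarrow> sat_seq F P e (concl p)"
proof (induction p arbitrary: F e)
  case (Leaf S)
  then show ?case by (auto simp: sat_seq_def is_axiom_def intro: bexI[of _ TT])
next
  case (Node r ps S)
  have prem: "sat_seq F' P e' S'" if "S' \<in> set (map concl ps)" for S' F' e'
    using Node that by auto
  then have prems: "\<forall>S'\<in>set (map concl ps). sat_seq F P e S'" by blast
  have "rinst r (map concl ps) S" using Node.prems by simp
  then show ?case
  proof cases
    case (exL c B \<Gamma> \<Delta>)
    then have fresh: "(c, 0) \<notin> symsf B" "\<forall>A\<in>#\<Gamma>. (c, 0) \<notin> symsf A" "\<forall>A\<in>#\<Delta>. (c, 0) \<notin> symsf A"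
      by (auto simp: seq_syms_def)
    have "sat_seq F P e (add_mset (Ex B) \<Gamma>, \<Delta>)"
      unfolding sat_seq_def fst_conv snd_conv
    proof
      assume "\<forall>A\<in>#add_mset (Ex B) \<Gamma>. eval_fm F P e A"
      then obtain x where "eval_fm F P (e\<langle>0:x\<rangle>) B" and "\<forall>A\<in>#\<Gamma>. eval_fm F P e A"
        by auto
      then have "\<forall>A\<in>#add_mset (inst B (Fn c [])) \<Gamma>. eval_fm (set_const F c x) P e A"
        using fresh by (simp add: eval_fm_inst_set_const eval_fm_set_const)
      then have "\<exists>A\<in>#\<Delta>. eval_fm (set_const F c x) P e A"
        using prem[of "(add_mset (inst B (Fn c [])) \<Gamma>, \<Delta>)" "set_const F c x" e] exL
        by (simp add: sat_seq_def)
      then show "\<exists>A\<in>#\<Delta>. eval_fm F P e A"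
        using fresh by (simp add: eval_fm_set_const)
    qed
    then show ?thesis using exL by simp
  next
    case (allR c \<Gamma> B \<Delta>)
    then have fresh: "(c, 0) \<notin> symsf B" "\<forall>A\<in>#\<Gamma>. (c, 0) \<notin> symsf A" "\<forall>A\<in>#\<Delta>. (c, 0) \<notin> symsf A"
      by (auto simp: seq_syms_def)
    have "sat_seq F P e (\<Gamma>, add_mset (All B) \<Delta>)"
      unfolding sat_seq_def fst_conv snd_conv
    proof
      assume \<Gamma>: "\<forall>A\<in>#\<Gamma>. eval_fm F P e A"
      show "\<exists>A\<in>#add_mset (All B) \<Delta>. eval_fm F P e A"
      proof (cases "\<exists>A\<in>#\<Delta>. eval_fm F P e A")
        case False
        have "eval_fm F P (e\<langle>0:x\<rangle>) B" for x
        proof -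
          have "\<forall>A\<in>#\<Gamma>. eval_fm (set_const F c x) P e A"
            using \<Gamma> fresh by (simp add: eval_fm_set_const)
          then have "\<exists>A\<in>#add_mset (inst B (Fn c [])) \<Delta>. eval_fm (set_const F c x) P e A"
            using prem[of "(\<Gamma>, add_mset (inst B (Fn c [])) \<Delta>)" "set_const F c x" e] allR
            by (simp add: sat_seq_def)
          then show ?thesis
            using False fresh by (simp add: eval_fm_inst_set_const eval_fm_set_const)
        qed
        then show ?thesis by simp
      qed simp
    qed
    then show ?thesis using allR by simp
  qed (use prems in \<open>auto simp: sat_seq_def eval_fm_inst\<close>)
qed

section \<open>Counterexamples\<close>

lemma uniform_proof_root:
  "uniform_proof q \<Longrightarrow> concl q = (\<Gamma>, {#G#}) \<Longrightarrow> intro_ok G q \<and> c_proof q"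
  by (cases q) (auto simp: uniform_proof_def i_proof_def)

lemma uniform_proof_Disj:
  assumes "uniform_proof q" and "concl q = (\<Gamma>, {#Disj A B#})"
  shows "\<exists>p. c_proof p \<and> (concl p = (\<Gamma>, {#A#}) \<or> concl p = (\<Gamma>, {#B#}))"
proof -
  obtain ps where "q = Node OrR ps (\<Gamma>, {#Disj A B#})" and "c_proof q"
    using uniform_proof_root[OF assms] assms(2) by auto
  then have "rinst OrR (map concl ps) (\<Gamma>, {#Disj A B#})" and "\<forall>p\<in>set ps. c_proof p"
    by auto
  then show ?thesis by (auto elim!: rinst.cases)
qed

lemma uniform_proof_Ex:
  assumes "uniform_proof q" and "concl q = (\<Gamma>, {#Ex B#})"
  shows "\<exists>t p. c_proof p \<and> concl p = (\<Gamma>, {#inst B t#})"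
proof -
  obtain ps where "q = Node ExR ps (\<Gamma>, {#Ex B#})" and "c_proof q"
    using uniform_proof_root[OF assms] assms(2) by auto
  then have "rinst ExR (map concl ps) (\<Gamma>, {#Ex B#})" and "\<forall>p\<in>set ps. c_proof p"
    by auto
  then show ?thesis by (fastforce elim!: rinst.cases)
qed

lemma no_c_proof_of_atom_instance:
  assumes "\<And>v. \<forall>A\<in>#\<Gamma>. eval_fm F (\<lambda>_ xs. xs \<noteq> [v]) e A"
  shows "\<not> (c_proof p \<and> concl p = (\<Gamma>, {#Atom k [t]#}))"
  using c_proof_sound[of p F "\<lambda>_ xs. xs \<noteq> [eval_trm F e t]" e] assms[of "eval_trm F e t"]
  by (auto simp: sat_seq_def)

lemma inst_unary_atom [simp]: "inst (Atom k [Var 0]) t = Atom k [t]"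
  by (simp add: inst_def)

lemma OrL_ExR_counterexample:
  "\<exists>S p. i_proof p \<and> concl p = S \<and> OrL \<in> rules_used p \<and> ExR \<in> rules_used p \<and>
     \<not> (\<exists>q. uniform_proof q \<and> concl q = S)"
proof -
  define a where "a = Atom 0 [Fn 0 []]"
  define b where "b = Atom 0 [Fn 1 []]"
  define S where "S = ({#Disj a b#}, {#Ex (Atom 0 [Var 0])#})"
  define p where "p = Node OrL
    [Node ExR [Leaf ({#a#}, {#a#})] ({#a#}, {#Ex (Atom 0 [Var 0])#}),
     Node ExR [Leaf ({#b#}, {#b#})] ({#b#}, {#Ex (Atom 0 [Var 0])#})] S"
  have "rinst ExR [({#a#}, {#a#})] ({#a#}, {#Ex (Atom 0 [Var 0])#})"
    using rinst.exR[of "{#a#}" "Atom 0 [Var 0]" "Fn 0 []" "{#}"] by (simp add: a_def)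
  moreover have "rinst ExR [({#b#}, {#b#})] ({#b#}, {#Ex (Atom 0 [Var 0])#})"
    using rinst.exR[of "{#b#}" "Atom 0 [Var 0]" "Fn 1 []" "{#}"] by (simp add: b_def)
  moreover have "rinst OrL [({#a#}, {#Ex (Atom 0 [Var 0])#}), ({#b#}, {#Ex (Atom 0 [Var 0])#})] S"
    using rinst.orL[of a "{#}" "{#Ex (Atom 0 [Var 0])#}" b] by (simp add: S_def)
  ultimately have "i_proof p"
    by (simp add: p_def i_proof_def S_def is_axiom_def a_def b_def)
  moreover have "\<not> (\<exists>q. uniform_proof q \<and> concl q = S)"
  proof
    assume "\<exists>q. uniform_proof q \<and> concl q = S"
    then obtain q where "uniform_proof q" "concl q = ({#Disj a b#}, {#Ex (Atom 0 [Var 0])#})"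
      unfolding S_def by blast
    from uniform_proof_Ex[OF this] obtain t p' where
      "c_proof p'" "concl p' = ({#Disj a b#}, {#Atom 0 [t]#})"
      by auto
    moreover have "\<forall>A\<in>#{#Disj a b#}. eval_fm (\<lambda>f _. f) (\<lambda>_ xs. xs \<noteq> [v]) (\<lambda>_. 0::nat) A" for v
      by (auto simp: a_def b_def)
    ultimately show False using no_c_proof_of_atom_instance by metis
  qed
  ultimately show ?thesis by (intro exI[of _ S] exI[of _ p]) (simp add: p_def)
qed

lemma OrL_OrR_counterexample:
  "\<exists>S p. i_proof p \<and> concl p = S \<and> OrL \<in> rules_used p \<and> OrR \<in> rules_used p \<and>
     \<not> (\<exists>q. uniform_proof q \<and> concl q = S)"
proof -
  define a where "a = Atom 0 []"
  define b where "b = Atom 1 []"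
  define S where "S = ({#Disj a b#}, {#Disj b a#})"
  define p where "p = Node OrL
    [Node OrR [Leaf ({#a#}, {#a#})] ({#a#}, {#Disj b a#}),
     Node OrR [Leaf ({#b#}, {#b#})] ({#b#}, {#Disj b a#})] S"
  have "rinst OrR [({#a#}, {#a#})] ({#a#}, {#Disj b a#})"
    using rinst.orR2[of "{#a#}" a "{#}" b] by simp
  moreover have "rinst OrR [({#b#}, {#b#})] ({#b#}, {#Disj b a#})"
    using rinst.orR1[of "{#b#}" b "{#}" a] by simp
  moreover have "rinst OrL [({#a#}, {#Disj b a#}), ({#b#}, {#Disj b a#})] S"
    using rinst.orL[of a "{#}" "{#Disj b a#}" b] by (simp add: S_def)
  ultimately have "i_proof p"
    by (simp add: p_def i_proof_def S_def is_axiom_def a_def b_def)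
  moreover have "\<not> (\<exists>q. uniform_proof q \<and> concl q = S)"
  proof
    assume "\<exists>q. uniform_proof q \<and> concl q = S"
    then obtain q where "uniform_proof q" "concl q = ({#Disj a b#}, {#Disj b a#})"
      unfolding S_def by blast
    from uniform_proof_Disj[OF this] obtain p' k where
      "c_proof p'" "concl p' = ({#Disj a b#}, {#Atom k []#})"
      unfolding a_def b_def by blast
    then show False
      using c_proof_sound[of p' "\<lambda>_ _. ()" "\<lambda>q _. q \<noteq> k" "\<lambda>_. ()"]
      by (auto simp: sat_seq_def a_def b_def)
  qed
  ultimately show ?thesis by (intro exI[of _ S] exI[of _ p]) (simp add: p_def)
qed

lemma ExL_ExR_counterexample:
  "\<exists>S p. i_proof p \<and> concl p = S \<and> ExL \<in> rules_used p \<and> ExR \<in> rules_used p \<and>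
     \<not> (\<exists>q. uniform_proof q \<and> concl q = S)"
proof -
  define a where "a = Atom 0 [Fn 0 []]"
  define S where "S = ({#Ex (Atom 0 [Var 0])#}, {#Ex (Atom 0 [Var 0])#})"
  define p where "p = Node ExL [Node ExR [Leaf ({#a#}, {#a#})] ({#a#}, {#Ex (Atom 0 [Var 0])#})] S"
  have "rinst ExR [({#a#}, {#a#})] ({#a#}, {#Ex (Atom 0 [Var 0])#})"
    using rinst.exR[of "{#a#}" "Atom 0 [Var 0]" "Fn 0 []" "{#}"] by (simp add: a_def)
  moreover have "rinst ExL [({#a#}, {#Ex (Atom 0 [Var 0])#})] S"
    using rinst.exL[of 0 "Atom 0 [Var 0]" "{#}" "{#Ex (Atom 0 [Var 0])#}"]
    by (simp add: S_def a_def seq_syms_def)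
  ultimately have "i_proof p"
    by (simp add: p_def i_proof_def S_def is_axiom_def a_def)
  moreover have "\<not> (\<exists>q. uniform_proof q \<and> concl q = S)"
  proof
    assume "\<exists>q. uniform_proof q \<and> concl q = S"
    then obtain q where "uniform_proof q" "concl q = ({#Ex (Atom 0 [Var 0])#}, {#Ex (Atom 0 [Var 0])#})"
      unfolding S_def by blast
    from uniform_proof_Ex[OF this] obtain t p' where
      "c_proof p'" "concl p' = ({#Ex (Atom 0 [Var 0])#}, {#Atom 0 [t]#})"
      by auto
    moreover have "\<forall>A\<in>#{#Ex (Atom 0 [Var 0])#}. eval_fm (\<lambda>f _. f) (\<lambda>_ xs. xs \<noteq> [v]) (\<lambda>_. 0::nat) A"
      for v
      by (auto simp: shift_def intro: exI[of _ "Suc v"])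
    ultimately show False using no_c_proof_of_atom_instance by metis
  qed
  ultimately show ?thesis by (intro exI[of _ S] exI[of _ p]) (simp add: p_def)
qed

theorem theorem8:
  shows "(\<forall>(\<Gamma> :: fm multiset) (G :: fm) p.
            i_proof p \<and> concl p = (\<Gamma>, {#G#}) \<and>
            (OrL \<notin> rules_used p \<or> (OrR \<notin> rules_used p \<and> ExR \<notin> rules_used p)) \<and>
            (ExL \<notin> rules_used p \<or> ExR \<notin> rules_used p)
          \<longrightarrow> (\<exists>q. uniform_proof q \<and> concl q = (\<Gamma>, {#G#})))
       \<and> (\<exists>S p. i_proof p \<and> concl p = S \<and> OrL \<in> rules_used p \<and> ExR \<in> rules_used p \<and>
                \<not> (\<exists>q. uniform_proof q \<and> concl q = S))
       \<and> (\<exists>S p. i_proof p \<and> concl p = S \<and> OrL \<in> rules_used p \<and> OrR \<in> rules_used p \<and>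
                \<not> (\<exists>q. uniform_proof q \<and> concl q = S))
       \<and> (\<exists>S p. i_proof p \<and> concl p = S \<and> ExL \<in> rules_used p \<and> ExR \<in> rules_used p \<and>
                \<not> (\<exists>q. uniform_proof q \<and> concl q = S))"
proof (intro conjI allI impI OrL_ExR_counterexample OrL_OrR_counterexample ExL_ExR_counterexample)
  fix \<Gamma> G p
  assume "i_proof p \<and> concl p = (\<Gamma>, {#G#}) \<and>
    (OrL \<notin> rules_used p \<or> (OrR \<notin> rules_used p \<and> ExR \<notin> rules_used p)) \<and>
    (ExL \<notin> rules_used p \<or> ExR \<notin> rules_used p)"
  then show "\<exists>q. uniform_proof q \<and> concl q = (\<Gamma>, {#G#})"
    using uniformly_provable_if_i_proof[of p \<Gamma> G]
    unfolding uniformizable_def uniformly_provable_def by blast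
qed

end
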